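(* If a depth-proper mttr $M$ is finite-ML-nesting, then $M$ is LHI, i.e., there is $b\in\mathbb N$ with $H(M(t))\le b\cdot H(t)$ for all input trees $t$.
   Context: Trees: for a ranked alphabet $\Sigma$, $T_\Sigma$ is the set of finite ranked ordered trees over $\Sigma$, and $T_\Sigma(A)$ the trees over $\Sigma$ with additional rank-0 symbols from $A$. $X_k=\{x_1,\dots,x_k\}$ are input variables and $Y=\{y_1,y_2,\dots\}$, $Y_m=\{y_1,\dots,y_m\}$ are parameters. A (deterministic bottom-up) tree automaton $(P,\Sigma,h)$ has a finite state set $P$ and maps $h_\sigma:P^k\to P$ for $\sigma\in\Sigma^{(k)}$; $\hat h:T_\Sigma\to P$ is its run and $L_p=\{s\in T_\Sigma\mid \hat h(s)=p\}$. A (total, deterministic) macro tree transducer with look-ahead (mttr) is $M=(Q,P,\Sigma,\Delta,q_0,R,h)$ where $Q$ is a ranked alphabet of states, $\Sigma,\Delta$ are ranked input/output alphabets, $(P,\Sigma,h)$ is a tree automaton (the look-ahead), $q_0\in Q^{(0)}$, and for each $q\in Q^{(m)}$, $\sigma\in\Sigma^{(k)}$, $p_1,\dots,p_k\in P$ there is exactly one rule $\langle q,\sigma(x_1:p_1,\dots,x_k:p_k)\rangle(y_1,\dots,y_m)\to t$ with $t\in T_{\Delta\cup\langle Q,X_k\rangle}(Y_m)$, where $\langle q',x_i\rangle$ has the rank of $q'$. For $q\in Q^{(m)}$ and $s=\sigma(s_1,\dots,s_k)$, $M_q(s)\in T_\Delta(Y_m)$ is obtained from the right-hand side of the rule for $(q,\sigma,\hat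 h(s_1),\dots,\hat h(s_k))$ by replacing (recursively, innermost first) each subtree $\langle q',x_i\rangle(\xi_1,\dots,\xi_n)$ by $M_{q'}(s_i)$ with each $y_j$ replaced by (the result for) $\xi_j$; $M(s)=M_{q_0}(s)$. Extension and reachability: $\hat M$ is the mttr with input alphabet $\Sigma\cup P$ (each $p\in P$ a rank-0 input symbol with $\hat h_p()=p$), output alphabet $\Delta\cup\langle Q,P\rangle$ (where $\langle q,p\rangle$ has the rank of $q$), the rules of $M$ plus the rules $\langle q,p\rangle(y_1,\dots,y_m)\to\langle q,p\rangle(y_1,\dots,y_m)$ for $q\in Q^{(m)}$, $p\in P$. A pair $\langle q,p\rangle$ is reachable if it occurs in $\hat M(s)$ for some $s\in T_\Sigma(P)$. Depth-proper: for $y\in Y$ and $s\in T_\Delta(Y)$, $\lfloor s\rfloor_y$ is obtained from $s$ by replacing every maximal subtree not containing $y$ by a new rank-0 symbol $\$$. $M$ is depth-proper if for every reachable $\langle q,p\rangle$ with $q\in Q^{(m)}$ and every $y\in Y_m$, the set $\{\lfloor M_q(s)\rfloor_y\mid s\in L_p\}$ is infinite. Height: $H(t)$ is the number of nodes on a longest root-to-leaf path of $t$. ML-nesting: for $t\in T_\Sigma(P)$, the nesting of a root-to-leaf path of $\hat M(t)$ is the number of its nodes labeled by symbols of $\langle Q,P\rangle$. $M$ is finite-ML-nesting if there is $b\in\mathbb N$ such that for every $t\in T_\Sigma(P)$ (with any number of leaves labeled by symbols of $P$), every root-to-leaf path of $\hat M(t)$ has nesting at most $b$. *)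

theory Defs
  imports Main
begin

datatype 'a rtree = Node 'a "'a rtree list"

fun wf_tree :: "'a set \<Rightarrow> ('a \<Rightarrow> nat) \<Rightarrow> 'a rtree \<Rightarrow> bool" where
  "wf_tree A rk (Node a ts) = (a \<in> A \<and> length ts = rk a \<and> (\<forall>t\<in>set ts. wf_tree A rk t))"

fun height :: "'a rtree \<Rightarrow> nat" where
  "height (Node a ts) = Suc (Max (insert 0 (set (map height ts))))"

fun paths :: "'a rtree \<Rightarrow> 'a list set" where
  "paths (Node a ts) = (if ts = [] then {[a]} else (\<lambda>\<pi>. a # \<pi>) ` (\<Union>t\<in>set ts. paths t))"

text \<open>Labels of output trees of the extension: symbols of Delta, symbols <q,p> of <Q,P>,
  and parameters OY j standing for y_(j+1).\<close>
datatype ('d,'q,'p) olab = OD 'd | OS 'q 'p | OY nat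

text \<open>Labels of right-hand sides: output symbols, calls <q',x_(i+1)>, parameters y_(j+1).\<close>
datatype ('d,'q) rlab = RD 'd | RC 'q nat | RY nat

text \<open>Input trees of the extension are trees over Sigma \<union> P, labels Inl sigma / Inr p.\<close>

fun wf_rhs :: "'q set \<Rightarrow> ('q \<Rightarrow> nat) \<Rightarrow> 'd set \<Rightarrow> ('d \<Rightarrow> nat) \<Rightarrow> nat \<Rightarrow> nat
               \<Rightarrow> ('d,'q) rlab rtree \<Rightarrow> bool" where
  "wf_rhs Q rkQ D rkD k m (Node (RD d) ts) =
     (d \<in> D \<and> length ts = rkD d \<and> (\<forall>t\<in>set ts. wf_rhs Q rkQ D rkD k m t))"
| "wf_rhs Q rkQ D rkD k m (Node (RC q i) ts) =
     (q \<in> Q \<and> i < k \<and> length ts = rkQ q \<and> (\<forall>t\<in>set ts. wf_rhs Q rkQ D rkD k m t))"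
| "wf_rhs Q rkQ D rkD k m (Node (RY j) ts) = (j < m \<and> ts = [])"

text \<open>A total deterministic mttr (Q,P,Sigma,Delta,q0,R,h) with look-ahead automaton (P,Sigma,h).
  The rule for (q, sigma, p_1..p_k) has right-hand side R q sigma [p_1,..,p_k].
  Child x_(i+1) is referred to by index i, parameter y_(j+1) by index j.\<close>
definition is_mttr ::
  "'q set \<Rightarrow> ('q \<Rightarrow> nat) \<Rightarrow> 'p set \<Rightarrow> 's set \<Rightarrow> ('s \<Rightarrow> nat) \<Rightarrow> 'd set \<Rightarrow> ('d \<Rightarrow> nat)
   \<Rightarrow> 'q \<Rightarrow> ('q \<Rightarrow> 's \<Rightarrow> 'p list \<Rightarrow> ('d,'q) rlab rtree) \<Rightarrow> ('s \<Rightarrow> 'p list \<Rightarrow> 'p) \<Rightarrow> bool" where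
  "is_mttr Q rkQ P Sig rkS D rkD q0 R h \<longleftrightarrow>
     finite Q \<and> finite P \<and> finite Sig \<and> finite D \<and>
     q0 \<in> Q \<and> rkQ q0 = 0 \<and>
     (\<forall>\<sigma>\<in>Sig. \<forall>ps. set ps \<subseteq> P \<and> length ps = rkS \<sigma> \<longrightarrow> h \<sigma> ps \<in> P) \<and>
     (\<forall>q\<in>Q. \<forall>\<sigma>\<in>Sig. \<forall>ps. set ps \<subseteq> P \<and> length ps = rkS \<sigma> \<longrightarrow>
        wf_rhs Q rkQ D rkD (rkS \<sigma>) (rkQ q) (R q \<sigma> ps))"

fun run :: "('s \<Rightarrow> 'p list \<Rightarrow> 'p) \<Rightarrow> ('s + 'p) rtree \<Rightarrow> 'p" where
  "run h (Node (Inl \<sigma>) ts) = h \<sigma> (map (run h) ts)"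
| "run h (Node (Inr p) ts) = p"

text \<open>Second-order substitution of parameters: y_(j+1) := us ! j.\<close>
fun subst :: "('d,'q,'p) olab rtree \<Rightarrow> ('d,'q,'p) olab rtree list \<Rightarrow> ('d,'q,'p) olab rtree" where
  "subst (Node (OY j) ts) us = (if j < length us then us ! j else Node (OY j) (map (\<lambda>t. subst t us) ts))"
| "subst (Node a ts) us = Node a (map (\<lambda>t. subst t us) ts)"

text \<open>Instantiate a right-hand side, given the results f q' i = M_q'(s_(i+1)).\<close>
fun inst :: "('d,'q) rlab rtree \<Rightarrow> ('q \<Rightarrow> nat \<Rightarrow> ('d,'q,'p) olab rtree) \<Rightarrow> ('d,'q,'p) olab rtree" where
  "inst (Node (RD d) ts) f = Node (OD d) (map (\<lambda>t. inst t f) ts)"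
| "inst (Node (RY j) ts) f = Node (OY j) []"
| "inst (Node (RC q i) ts) f = subst (f q i) (map (\<lambda>t. inst t f) ts)"

text \<open>Semantics of the extension hat M: Mhat rkQ R h s q = hat M_q(s), for s in T_Sigma(P).
  Rules of M for input symbols of Sigma, and <q,p>(y_1..y_m) -> <q,p>(y_1..y_m) for p in P.\<close>
fun Mhat :: "('q \<Rightarrow> nat) \<Rightarrow> ('q \<Rightarrow> 's \<Rightarrow> 'p list \<Rightarrow> ('d,'q) rlab rtree) \<Rightarrow> ('s \<Rightarrow> 'p list \<Rightarrow> 'p)
             \<Rightarrow> ('s + 'p) rtree \<Rightarrow> 'q \<Rightarrow> ('d,'q,'p) olab rtree" where
  "Mhat rkQ R h (Node (Inl \<sigma>) ts) =
     (let rs = map (Mhat rkQ R h) ts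
      in (\<lambda>q. inst (R q \<sigma> (map (run h) ts)) (\<lambda>q' i. (rs ! i) q')))"
| "Mhat rkQ R h (Node (Inr p) ts) =
     (\<lambda>q. Node (OS q p) (map (\<lambda>j. Node (OY j) []) [0..<rkQ q]))"

text \<open>The mttr M itself on input trees over Sigma: M_q(s) (it uses only the rules of M).\<close>
definition Mq :: "('q \<Rightarrow> nat) \<Rightarrow> ('q \<Rightarrow> 's \<Rightarrow> 'p list \<Rightarrow> ('d,'q) rlab rtree) \<Rightarrow> ('s \<Rightarrow> 'p list \<Rightarrow> 'p)
                  \<Rightarrow> 'q \<Rightarrow> 's rtree \<Rightarrow> ('d,'q,'p) olab rtree" where
  "Mq rkQ R h q s = Mhat rkQ R h (map_rtree Inl s) q"

definition TSig :: "'s set \<Rightarrow> ('s \<Rightarrow> nat) \<Rightarrow> 's rtree set" where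
  "TSig Sig rkS = {s. wf_tree Sig rkS s}"

definition TSigP :: "'s set \<Rightarrow> ('s \<Rightarrow> nat) \<Rightarrow> 'p set \<Rightarrow> ('s + 'p) rtree set" where
  "TSigP Sig rkS P = {s. wf_tree (Inl ` Sig \<union> Inr ` P) (case_sum rkS (\<lambda>_. 0)) s}"

definition Lp :: "'s set \<Rightarrow> ('s \<Rightarrow> nat) \<Rightarrow> ('s \<Rightarrow> 'p list \<Rightarrow> 'p) \<Rightarrow> 'p \<Rightarrow> 's rtree set" where
  "Lp Sig rkS h p = {s \<in> TSig Sig rkS. run h (map_rtree Inl s) = p}"

definition reachable ::
  "'s set \<Rightarrow> ('s \<Rightarrow> nat) \<Rightarrow> 'p set \<Rightarrow> ('q \<Rightarrow> nat) \<Rightarrow> 'q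
   \<Rightarrow> ('q \<Rightarrow> 's \<Rightarrow> 'p list \<Rightarrow> ('d,'q) rlab rtree) \<Rightarrow> ('s \<Rightarrow> 'p list \<Rightarrow> 'p) \<Rightarrow> 'q \<Rightarrow> 'p \<Rightarrow> bool" where
  "reachable Sig rkS P rkQ q0 R h q p \<longleftrightarrow>
     (\<exists>s \<in> TSigP Sig rkS P. OS q p \<in> set_rtree (Mhat rkQ R h s q0))"

text \<open>floor(s)_y: replace every maximal subtree not containing y by the new symbol dollar (None).\<close>
fun cut :: "'a \<Rightarrow> 'a rtree \<Rightarrow> 'a option rtree" where
  "cut y (Node a ts) = (if y \<in> set_rtree (Node a ts) then Node (Some a) (map (cut y) ts) else Node None [])"

definition depth_proper ::
  "'q set \<Rightarrow> ('q \<Rightarrow> nat) \<Rightarrow> 'p set \<Rightarrow> 's set \<Rightarrow> ('s \<Rightarrow> nat)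
   \<Rightarrow> 'q \<Rightarrow> ('q \<Rightarrow> 's \<Rightarrow> 'p list \<Rightarrow> ('d,'q) rlab rtree) \<Rightarrow> ('s \<Rightarrow> 'p list \<Rightarrow> 'p) \<Rightarrow> bool" where
  "depth_proper Q rkQ P Sig rkS q0 R h \<longleftrightarrow>
     (\<forall>q\<in>Q. \<forall>p\<in>P. reachable Sig rkS P rkQ q0 R h q p \<longrightarrow>
        (\<forall>j < rkQ q. infinite ((\<lambda>s. cut (OY j) (Mq rkQ R h q s)) ` Lp Sig rkS h p)))"

definition is_OS :: "('d,'q,'p) olab \<Rightarrow> bool" where
  "is_OS a \<longleftrightarrow> (\<exists>q p. a = OS q p)"

definition finite_ML_nesting ::
  "('q \<Rightarrow> nat) \<Rightarrow> 'p set \<Rightarrow> 's set \<Rightarrow> ('s \<Rightarrow> nat)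
   \<Rightarrow> 'q \<Rightarrow> ('q \<Rightarrow> 's \<Rightarrow> 'p list \<Rightarrow> ('d,'q) rlab rtree) \<Rightarrow> ('s \<Rightarrow> 'p list \<Rightarrow> 'p) \<Rightarrow> bool" where
  "finite_ML_nesting rkQ P Sig rkS q0 R h \<longleftrightarrow>
     (\<exists>b::nat. \<forall>t \<in> TSigP Sig rkS P. \<forall>\<pi> \<in> paths (Mhat rkQ R h t q0).
        length (filter is_OS \<pi>) \<le> b)"

definition LHI ::
  "('q \<Rightarrow> nat) \<Rightarrow> 's set \<Rightarrow> ('s \<Rightarrow> nat)
   \<Rightarrow> 'q \<Rightarrow> ('q \<Rightarrow> 's \<Rightarrow> 'p list \<Rightarrow> ('d,'q) rlab rtree) \<Rightarrow> ('s \<Rightarrow> 'p list \<Rightarrow> 'p) \<Rightarrow> bool" where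
  "LHI rkQ Sig rkS q0 R h \<longleftrightarrow>
     (\<exists>b::nat. \<forall>t \<in> TSig Sig rkS. height (Mq rkQ R h q0 t) \<le> b * height t)"

end

theory Submission
  imports Defs
begin

text \<open>Cut the input tree \<open>t\<close> at depth \<open>d\<close>, keeping the cut-off subtrees as leaves. The extension
  \<open>Mhat\<close> applied to this truncation is a tree whose state nodes \<open>\<langle>q,s\<rangle>\<close> are the pending calls
  \<open>M\<^sub>q(s)\<close>. Passing from depth \<open>d\<close> to \<open>d+1\<close> replaces every state node by an instance of a right-hand
  side into which its arguments are substituted, so on every path at most \<open>c\<close> new non-state nodes
  appear per state node on that path, where \<open>c\<close> bounds the heights of the right-hand sides. Finite
  ML-nesting, applied to the truncation with every leaf replaced by its look-ahead state, bounds
  the number of state nodes on a path by some \<open>b\<close>, hence every path of \<open>M(t)\<close>,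
  reached after \<open>height t\<close> steps, has at most \<open>c\<cdot>b\<cdot>height t + b\<close> nodes.\<close>

fun max_list :: "nat list \<Rightarrow> nat" where
  "max_list [] = 0"
| "max_list (x # xs) = max x (max_list xs)"

lemma max_list_ge: "x \<in> set xs \<Longrightarrow> x \<le> max_list xs"
  by (induction xs) auto

lemma max_list_le: "(\<And>x. x \<in> set xs \<Longrightarrow> x \<le> B) \<Longrightarrow> max_list xs \<le> B"
  by (induction xs) auto

lemma max_list_map_mono:
  "(\<And>x. x \<in> set xs \<Longrightarrow> f x \<le> g x) \<Longrightarrow> max_list (map f xs) \<le> max_list (map g xs)"
  by (induction xs) (force simp: le_max_iff_disj)+

lemma max_list_map_add:
  "max_list (map (\<lambda>x. f x + g x) xs) \<le> max_list (map f xs) + max_list (map g xs)"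
  by (induction xs) auto

lemma max_list_map_attained: "xs \<noteq> [] \<Longrightarrow> \<exists>x\<in>set xs. max_list (map f xs) = f x"
proof (induction xs)
  case (Cons a xs)
  then show ?case by (cases "xs = []") (auto simp: max_def)
qed simp

lemma Max_insert_0_eq_max_list: "Max (insert 0 (set xs)) = max_list xs"
  by (induction xs) (auto simp: insert_commute)

lemma height_Node: "height (Node a ts) = Suc (max_list (map height ts))"
  using Max_insert_0_eq_max_list[of "map height ts"] by simp

declare height.simps [simp del]

lemma height_map_rtree: "height (map_rtree F u) = height u"
  by (induction u) (simp add: height_Node o_def cong: map_cong)

section \<open>Output trees\<close>

text \<open>\<open>state_nesting\<close> is the ML-nesting: the maximal number of state nodes on a path.\<close>

fun plain_depth :: "('d,'q,'x) olab rtree \<Rightarrow> nat" where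
  "plain_depth (Node a ts) = (if is_OS a then 0 else 1) + max_list (map plain_depth ts)"

fun state_nesting :: "('d,'q,'x) olab rtree \<Rightarrow> nat" where
  "state_nesting (Node a ts) = (if is_OS a then 1 else 0) + max_list (map state_nesting ts)"

fun weighted_depth :: "nat \<Rightarrow> ('d,'q,'x) olab rtree \<Rightarrow> nat" where
  "weighted_depth c (Node a ts) = (if is_OS a then c else 1) + max_list (map (weighted_depth c) ts)"

lemma weighted_depth_le: "weighted_depth c u \<le> plain_depth u + c * state_nesting u"
proof (induction u)
  case (Node a ts)
  have "max_list (map (weighted_depth c) ts)
      \<le> max_list (map (\<lambda>t. plain_depth t + c * state_nesting t) ts)"
    using Node by (intro max_list_map_mono) auto
  also have "\<dots> \<le> max_list (map plain_depth ts) + max_list (map (\<lambda>t. c * state_nesting t) ts)"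
    by (rule max_list_map_add)
  also have "max_list (map (\<lambda>t. c * state_nesting t) ts) \<le> c * max_list (map state_nesting ts)"
    by (rule max_list_le) (auto intro!: mult_le_mono2 max_list_ge)
  finally show ?case by (auto simp: algebra_simps)
qed

lemma height_le_plain_depth_add_state_nesting: "height u \<le> plain_depth u + state_nesting u"
proof (induction u)
  case (Node a ts)
  have "max_list (map height ts) \<le> max_list (map (\<lambda>t. plain_depth t + state_nesting t) ts)"
    using Node by (intro max_list_map_mono) auto
  also have "\<dots> \<le> max_list (map plain_depth ts) + max_list (map state_nesting ts)"
    by (rule max_list_map_add)
  finally show ?case by (auto simp: height_Node)
qed

lemma state_nesting_attained: "\<exists>\<pi>\<in>paths u. length (filter is_OS \<pi>) = state_nesting u"
proof (induction u)
  case (Node a ts)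
  show ?case
  proof (cases "ts = []")
    case False
    then obtain t where t: "t \<in> set ts" "max_list (map state_nesting ts) = state_nesting t"
      using max_list_map_attained by blast
    then obtain \<pi> where "\<pi> \<in> paths t" "length (filter is_OS \<pi>) = state_nesting t"
      using Node by blast
    then show ?thesis
      using False t by (intro bexI[of _ "a # \<pi>"]) auto
  qed auto
qed

lemma state_nesting_le_if_paths:
  "(\<forall>\<pi>\<in>paths u. length (filter is_OS \<pi>) \<le> b) \<Longrightarrow> state_nesting u \<le> b"
  using state_nesting_attained by fastforce

fun relabel :: "('x \<Rightarrow> 'y) \<Rightarrow> ('d,'q,'x) olab \<Rightarrow> ('d,'q,'y) olab" where
  "relabel g (OD d) = OD d"
| "relabel g (OS q x) = OS q (g x)"
| "relabel g (OY j) = OY j"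

lemma is_OS_relabel [simp]: "is_OS (relabel g a) = is_OS a"
  by (cases a) (auto simp: is_OS_def)

lemma state_nesting_relabel: "state_nesting (map_rtree (relabel g) u) = state_nesting u"
  by (induction u) (simp add: o_def cong: map_cong)

fun wf_out :: "'q set \<Rightarrow> 'x set \<Rightarrow> ('q \<Rightarrow> nat) \<Rightarrow> nat \<Rightarrow> ('d,'q,'x) olab rtree \<Rightarrow> bool" where
  "wf_out Q X rk m (Node (OY j) ts) = (j < m \<and> ts = [])"
| "wf_out Q X rk m (Node (OS q x) ts) =
     (q \<in> Q \<and> x \<in> X \<and> length ts = rk q \<and> (\<forall>t\<in>set ts. wf_out Q X rk m t))"
| "wf_out Q X rk m (Node (OD d) ts) = (\<forall>t\<in>set ts. wf_out Q X rk m t)"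

fun subst_states ::
  "('q \<Rightarrow> 'x \<Rightarrow> ('d,'q,'x) olab rtree) \<Rightarrow> ('d,'q,'x) olab rtree \<Rightarrow> ('d,'q,'x) olab rtree" where
  "subst_states B (Node (OS q x) ts) = subst (B q x) (map (subst_states B) ts)"
| "subst_states B (Node (OD d) ts) = Node (OD d) (map (subst_states B) ts)"
| "subst_states B (Node (OY j) ts) = Node (OY j) (map (subst_states B) ts)"

definition params :: "nat \<Rightarrow> ('d,'q,'x) olab rtree list" where
  "params m = map (\<lambda>j. Node (OY j) []) [0..<m]"

lemma subst_params: "wf_out Q X rk m u \<Longrightarrow> subst u (params m) = u"
proof (induction u)
  case (Node a ts)
  then show ?case by (cases a) (auto simp: params_def intro: map_idI)
qed

lemma subst_subst:
  "wf_out Q X rk (length vs) u \<Longrightarrow> subst (subst u vs) us = subst u (map (\<lambda>v. subst v us) vs)"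
proof (induction u)
  case (Node a ts)
  then show ?case by (cases a) auto
qed

lemma wf_out_subst:
  "\<lbrakk>wf_out Q X rk m u; length us = m; \<forall>v\<in>set us. wf_out Q X rk m' v\<rbrakk>
   \<Longrightarrow> wf_out Q X rk m' (subst u us)"
proof (induction u)
  case (Node a ts)
  then show ?case by (cases a) auto
qed

lemma subst_states_subst:
  assumes "wf_out Q X rk (length us) u" and "\<forall>q\<in>Q. \<forall>x\<in>X. wf_out Q X rk (rk q) (B q x)"
  shows "subst_states B (subst u us) = subst (subst_states B u) (map (subst_states B) us)"
  using assms(1)
proof (induction u)
  case (Node a ts)
  show ?case
  proof (cases a)
    case (OS q x)
    then have wf_B: "wf_out Q X rk (length (map (subst_states B) ts)) (B q x)"
      using Node assms(2) by auto
    have "subst_states B (subst (Node a ts) us)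
        = subst (B q x) (map (\<lambda>t. subst (subst_states B t) (map (subst_states B) us)) ts)"
      using Node OS by (auto cong: map_cong)
    also have "\<dots> = subst (subst (B q x) (map (subst_states B) ts)) (map (subst_states B) us)"
      using subst_subst[OF wf_B] by (simp add: o_def)
    finally show ?thesis using OS by simp
  qed (use Node in auto)
qed

lemma plain_depth_subst: "plain_depth (subst v us) \<le> plain_depth v + max_list (map plain_depth us)"
proof (induction v)
  case (Node a ts)
  let ?m = "max_list (map plain_depth us)"
  have children: "max_list (map (\<lambda>t. plain_depth (subst t us)) ts) \<le> max_list (map plain_depth ts) + ?m"
  proof -
    have "max_list (map (\<lambda>t. plain_depth (subst t us)) ts) \<le> max_list (map (\<lambda>t. plain_depth t + ?m) ts)"
      using Node by (intro max_list_map_mono) auto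
    also have "\<dots> \<le> max_list (map plain_depth ts) + max_list (map (\<lambda>t. ?m) ts)"
      by (rule max_list_map_add)
    also have "max_list (map (\<lambda>t. ?m) ts) \<le> ?m"
      by (rule max_list_le) auto
    finally show ?thesis by simp
  qed
  show ?case
  proof (cases a)
    case (OY j)
    show ?thesis
    proof (cases "j < length us")
      case True
      then have "plain_depth (us ! j) \<le> ?m" by (intro max_list_ge) auto
      then show ?thesis using OY True by (simp add: is_OS_def)
    qed (use OY children in \<open>simp add: o_def is_OS_def\<close>)
  qed (use children in \<open>auto simp: o_def is_OS_def\<close>)
qed

lemma plain_depth_subst_states:
  "\<lbrakk>wf_out Q X rk m u; \<forall>q\<in>Q. \<forall>x\<in>X. plain_depth (B q x) \<le> c\<rbrakk>
   \<Longrightarrow> plain_depth (subst_states B u) \<le> weighted_depth c u"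
proof (induction u)
  case (Node a ts)
  have children: "max_list (map (plain_depth \<circ> subst_states B) ts) \<le> max_list (map (weighted_depth c) ts)"
    using Node by (intro max_list_map_mono) (cases a; auto)
  show ?case
  proof (cases a)
    case (OS q x)
    then have "plain_depth (B q x) \<le> c" using Node by auto
    then show ?thesis
      using OS children plain_depth_subst[of "B q x" "map (subst_states B) ts"]
      by (auto simp: is_OS_def)
  qed (use children in \<open>auto simp: is_OS_def\<close>)
qed

lemma inst_cong:
  "\<lbrakk>wf_rhs Q rkQ D rkD k m r; \<And>q i. q \<in> Q \<Longrightarrow> i < k \<Longrightarrow> f q i = f' q i\<rbrakk>
   \<Longrightarrow> inst r f = inst r f'"
proof (induction r)
  case (Node a ts)
  have children: "map (\<lambda>t. inst t f) ts = map (\<lambda>t. inst t f') ts"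
    using Node by (cases a) (auto intro!: map_cong)
  show ?case
  proof (cases a)
    case (RC q i)
    then have "f q i = f' q i" using Node.prems by auto
    then show ?thesis using RC by (simp only: inst.simps children)
  qed (simp_all only: inst.simps children)
qed

lemma wf_out_inst:
  "\<lbrakk>wf_rhs Q rkQ D rkD k m r; \<And>q i. q \<in> Q \<Longrightarrow> i < k \<Longrightarrow> wf_out Q X rkQ (rkQ q) (f q i)\<rbrakk>
   \<Longrightarrow> wf_out Q X rkQ m (inst r f)"
proof (induction r)
  case (Node a ts)
  then show ?case by (cases a) (auto intro!: wf_out_subst)
qed

lemma subst_states_inst:
  assumes "wf_rhs Q rkQ D rkD k m r"
    and "\<And>q i. q \<in> Q \<Longrightarrow> i < k \<Longrightarrow> wf_out Q X rkQ (rkQ q) (f q i)"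
    and "\<forall>q\<in>Q. \<forall>x\<in>X. wf_out Q X rkQ (rkQ q) (B q x)"
  shows "subst_states B (inst r f) = inst r (\<lambda>q i. subst_states B (f q i))"
  using assms(1)
proof (induction r)
  case (Node a ts)
  have children: "map (subst_states B) (map (\<lambda>t. inst t f) ts)
      = map (\<lambda>t. inst t (\<lambda>q i. subst_states B (f q i))) ts"
    using Node by (cases a) (auto intro!: map_cong)
  show ?case
  proof (cases a)
    case (RC q i)
    then have "wf_out Q X rkQ (length (map (\<lambda>t. inst t f) ts)) (f q i)"
      using Node assms(2) by auto
    then show ?thesis
      using RC subst_states_subst[OF _ assms(3)] by (simp only: inst.simps children)
  qed (simp_all only: inst.simps subst_states.simps children list.map(1))
qed

lemma plain_depth_inst:
  "\<lbrakk>wf_rhs Q rkQ D rkD k m r; \<And>q i. q \<in> Q \<Longrightarrow> i < k \<Longrightarrow> plain_depth (f q i) \<le> 1\<rbrakk>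
   \<Longrightarrow> plain_depth (inst r f) \<le> height r"
proof (induction r)
  case (Node a ts)
  have children: "max_list (map (\<lambda>t. plain_depth (inst t f)) ts) \<le> max_list (map height ts)"
    using Node by (intro max_list_map_mono) (cases a; auto)
  show ?case
  proof (cases a)
    case (RC q i)
    then have "plain_depth (f q i) \<le> 1" using Node by auto
    then show ?thesis
      using RC children plain_depth_subst[of "f q i" "map (\<lambda>t. inst t f) ts"]
      by (simp add: height_Node o_def)
  qed (use children in \<open>auto simp: height_Node o_def is_OS_def\<close>)
qed

lemma relabel_subst:
  "map_rtree (relabel g) (subst u us) = subst (map_rtree (relabel g) u) (map (map_rtree (relabel g)) us)"
proof (induction u)
  case (Node a ts)
  then show ?case by (cases a) (auto simp: o_def)
qed

lemma relabel_inst: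
  "map_rtree (relabel g) (inst r f) = inst r (\<lambda>q i. map_rtree (relabel g) (f q i))"
proof (induction r)
  case (Node a ts)
  have children: "map (map_rtree (relabel g)) (map (\<lambda>t. inst t f) ts)
      = map (\<lambda>t. inst t (\<lambda>q i. map_rtree (relabel g) (f q i))) ts"
    using Node by (auto intro!: map_cong)
  show ?case
    by (cases a) (simp_all only: inst.simps relabel_subst children rtree.map relabel.simps list.map(1))
qed

lemma Mhat_Inl:
  "Mhat rkQ R h (Node (Inl \<sigma>) ts) q = inst (R q \<sigma> (map (run h) ts)) (\<lambda>q' i. (map (Mhat rkQ R h) ts ! i) q')"
  by (simp add: Let_def)

lemma Mhat_Inr: "Mhat rkQ R h (Node (Inr p) ts) q = Node (OS q p) (params (rkQ q))"
  by (simp add: params_def)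

declare Mhat.simps [simp del]

section \<open>Truncations of input trees\<close>

text \<open>\<open>truncate d t\<close> keeps the top \<open>d\<close> levels of \<open>t\<close> and turns each subtree below them into a leaf
  labelled by that subtree; \<open>run Node\<close> glues the leaves back in.\<close>

fun truncate :: "nat \<Rightarrow> 's rtree \<Rightarrow> ('s + 's rtree) rtree" where
  "truncate 0 s = Node (Inr s) []"
| "truncate (Suc d) (Node \<sigma> ts) = Node (Inl \<sigma>) (map (truncate d) ts)"

fun expand_leaves :: "('s + 's rtree) rtree \<Rightarrow> ('s + 's rtree) rtree" where
  "expand_leaves (Node (Inl \<sigma>) ts) = Node (Inl \<sigma>) (map expand_leaves ts)"
| "expand_leaves (Node (Inr s) ts) = truncate 1 s"

lemma truncate_one: "truncate 1 (Node \<sigma> cs) = Node (Inl \<sigma>) (map (\<lambda>c. Node (Inr c) []) cs)"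
  by (simp add: o_def)

lemma expand_leaves_truncate: "expand_leaves (truncate d t) = truncate (Suc d) t"
proof (induction d arbitrary: t)
  case 0
  then show ?case by (cases t) simp
next
  case (Suc d)
  then show ?case by (cases t) simp
qed

lemma run_Node_expand_leaves: "run Node (expand_leaves t) = run Node t"
proof (induction t)
  case (Node a ts)
  show ?case
  proof (cases a)
    case (Inl \<sigma>)
    then show ?thesis using Node by (simp cong: map_cong)
  next
    case (Inr s)
    then show ?thesis by (cases s) (simp add: truncate_one o_def)
  qed
qed

lemma truncate_height: "height t \<le> d \<Longrightarrow> truncate d t = map_rtree Inl t"
proof (induction t arbitrary: d)
  case (Node \<sigma> ts)
  then obtain d' where d: "d = Suc d'"
    by (cases d) (auto simp: height_Node)
  have "height t \<le> d'" if "t \<in> set ts" for t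
    using max_list_ge[of "height t" "map height ts"] that Node.prems d by (auto simp: height_Node)
  then show ?case
    using Node d by auto
qed

definition wf_trunc :: "'s set \<Rightarrow> ('s \<Rightarrow> nat) \<Rightarrow> ('s + 's rtree) rtree \<Rightarrow> bool" where
  "wf_trunc Sig rkS t = wf_tree (Inl ` Sig \<union> Inr ` TSig Sig rkS) (case_sum rkS (\<lambda>_. 0)) t"

lemma wf_trunc_Inl:
  "wf_trunc Sig rkS (Node (Inl \<sigma>) ts) \<longleftrightarrow> \<sigma> \<in> Sig \<and> length ts = rkS \<sigma> \<and> (\<forall>t\<in>set ts. wf_trunc Sig rkS t)"
  by (auto simp: wf_trunc_def)

lemma wf_trunc_Inr: "wf_trunc Sig rkS (Node (Inr s) ts) \<longleftrightarrow> s \<in> TSig Sig rkS \<and> ts = []"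
  by (auto simp: wf_trunc_def)

lemma wf_trunc_truncate: "t \<in> TSig Sig rkS \<Longrightarrow> wf_trunc Sig rkS (truncate d t)"
proof (induction d arbitrary: t)
  case 0
  then show ?case by (simp add: wf_trunc_Inr)
next
  case (Suc d)
  then show ?case by (cases t) (auto simp: wf_trunc_Inl TSig_def)
qed

lemma run_Node_in_TSig: "wf_trunc Sig rkS t \<Longrightarrow> run Node t \<in> TSig Sig rkS"
proof (induction t)
  case (Node a ts)
  then show ?case by (cases a) (auto simp: TSig_def wf_trunc_Inl wf_trunc_Inr)
qed

section \<open>Transducers that look ahead at whole subtrees\<close>

locale mttr =
  fixes Q :: "'q set" and rkQ :: "'q \<Rightarrow> nat" and P :: "'p set"
    and Sig :: "'s set" and rkS :: "'s \<Rightarrow> nat" and D :: "'d set" and rkD :: "'d \<Rightarrow> nat"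
    and q0 :: 'q and R :: "'q \<Rightarrow> 's \<Rightarrow> 'p list \<Rightarrow> ('d,'q) rlab rtree"
    and h :: "'s \<Rightarrow> 'p list \<Rightarrow> 'p"
  assumes is_mttr: "is_mttr Q rkQ P Sig rkS D rkD q0 R h"
begin

definition lookahead :: "'s rtree \<Rightarrow> 'p" where
  "lookahead s = run h (map_rtree Inl s)"

text \<open>\<open>R_tree\<close> is \<open>M\<close> with the look-ahead state of an input tree replaced by the tree itself (the
  look-ahead automaton becomes \<open>Node\<close>). Applied to a truncation, its extension \<open>Mtree\<close> thus records
  the cut-off subtrees in its state nodes, and relabelling them by \<open>lookahead\<close> gives back \<open>Mhat\<close>.\<close>

definition R_tree :: "'q \<Rightarrow> 's \<Rightarrow> 's rtree list \<Rightarrow> ('d,'q) rlab rtree" where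
  "R_tree q \<sigma> ss = R q \<sigma> (map lookahead ss)"

abbreviation Mtree :: "('s + 's rtree) rtree \<Rightarrow> 'q \<Rightarrow> ('d,'q,'s rtree) olab rtree" where
  "Mtree \<equiv> Mhat rkQ R_tree Node"

lemma q0_in_Q: "q0 \<in> Q" and rank_q0: "rkQ q0 = 0"
  using is_mttr by (simp_all add: is_mttr_def)

lemma lookahead_Node: "lookahead (Node \<sigma> cs) = h \<sigma> (map lookahead cs)"
  unfolding lookahead_def [abs_def] by (simp add: o_def)

lemma lookahead_in_P: "s \<in> TSig Sig rkS \<Longrightarrow> lookahead s \<in> P"
proof (induction s)
  case (Node \<sigma> cs)
  then have "set (map lookahead cs) \<subseteq> P" "\<sigma> \<in> Sig" "length (map lookahead cs) = rkS \<sigma>"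
    by (auto simp: TSig_def)
  then have "h \<sigma> (map lookahead cs) \<in> P"
    using is_mttr unfolding is_mttr_def by blast
  then show ?case
    by (simp add: lookahead_Node)
qed

lemma run_map_lookahead: "run h (map_rtree (map_sum id lookahead) t) = lookahead (run Node t)"
proof (induction t)
  case (Node a ts)
  then show ?case
    by (cases a) (simp_all add: lookahead_Node o_def cong: map_cong)
qed

lemma wf_rhs_R_tree:
  assumes "q \<in> Q" and "wf_trunc Sig rkS (Node (Inl \<sigma>) ts)"
  shows "wf_rhs Q rkQ D rkD (length ts) (rkQ q) (R_tree q \<sigma> (map (run Node) ts))"
proof -
  have "set (map lookahead (map (run Node) ts)) \<subseteq> P"
    using assms(2) by (auto simp: wf_trunc_Inl intro!: lookahead_in_P run_Node_in_TSig)
  then show ?thesis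
    using is_mttr assms unfolding is_mttr_def R_tree_def by (auto simp: wf_trunc_Inl)
qed

lemma wf_out_Mtree:
  "\<lbrakk>wf_trunc Sig rkS t; q \<in> Q\<rbrakk> \<Longrightarrow> wf_out Q (TSig Sig rkS) rkQ (rkQ q) (Mtree t q)"
proof (induction t arbitrary: q)
  case (Node a ts)
  show ?case
  proof (cases a)
    case (Inl \<sigma>)
    have wf: "wf_trunc Sig rkS (Node (Inl \<sigma>) ts)"
      using Node.prems Inl by simp
    show ?thesis
      unfolding Inl Mhat_Inl
    proof (rule wf_out_inst[OF wf_rhs_R_tree[OF Node.prems(2) wf]])
      fix q' i assume "q' \<in> Q" "i < length ts"
      then show "wf_out Q (TSig Sig rkS) rkQ (rkQ q') ((map Mtree ts ! i) q')"
        using Node.IH wf by (auto simp: wf_trunc_Inl)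
    qed
  qed (use Node.prems in \<open>auto simp: Mhat_Inr params_def wf_trunc_Inr\<close>)
qed

lemma Mtree_expand_leaves:
  assumes "wf_trunc Sig rkS t" and "q \<in> Q"
  shows "Mtree (expand_leaves t) q = subst_states (\<lambda>q s. Mtree (truncate 1 s) q) (Mtree t q)"
  using assms
proof (induction t arbitrary: q)
  case (Node a ts)
  let ?B = "\<lambda>q s. Mtree (truncate 1 s) q"
  have wf_B: "\<forall>q\<in>Q. \<forall>s\<in>TSig Sig rkS. wf_out Q (TSig Sig rkS) rkQ (rkQ q) (?B q s)"
    by (blast intro: wf_out_Mtree wf_trunc_truncate)
  show ?case
  proof (cases a)
    case (Inl \<sigma>)
    have wf: "wf_trunc Sig rkS (Node (Inl \<sigma>) ts)"
      using Node.prems Inl by simp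
    let ?r = "R_tree q \<sigma> (map (run Node) ts)"
    have wf_r: "wf_rhs Q rkQ D rkD (length ts) (rkQ q) ?r"
      by (rule wf_rhs_R_tree[OF Node.prems(2) wf])
    have "Mtree (expand_leaves (Node a ts)) q
        = inst ?r (\<lambda>q' i. (map Mtree (map expand_leaves ts) ! i) q')"
      using Inl by (simp add: Mhat_Inl run_Node_expand_leaves o_def)
    also have "\<dots> = inst ?r (\<lambda>q' i. subst_states ?B ((map Mtree ts ! i) q'))"
      by (rule inst_cong[OF wf_r]) (use Node.IH wf in \<open>auto simp: wf_trunc_Inl\<close>)
    also have "\<dots> = subst_states ?B (inst ?r (\<lambda>q' i. (map Mtree ts ! i) q'))"
      by (rule subst_states_inst[OF wf_r _ wf_B, symmetric])
        (use wf in \<open>auto simp: wf_trunc_Inl intro: wf_out_Mtree\<close>)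
    finally show ?thesis
      using Inl by (simp add: Mhat_Inl)
  next
    case (Inr s)
    then have s: "s \<in> TSig Sig rkS"
      using Node.prems by (simp add: wf_trunc_Inr)
    have "subst_states ?B (Node (OS q s) (params (rkQ q))) = subst (?B q s) (params (rkQ q))"
      by (simp add: params_def o_def)
    also have "\<dots> = ?B q s"
      using wf_B s Node.prems(2) by (auto intro: subst_params)
    finally show ?thesis
      using Inr by (simp add: Mhat_Inr)
  qed
qed

lemma Mhat_map_lookahead:
  assumes "wf_trunc Sig rkS t" and "q \<in> Q"
  shows "Mhat rkQ R h (map_rtree (map_sum id lookahead) t) q = map_rtree (relabel lookahead) (Mtree t q)"
  using assms
proof (induction t arbitrary: q)
  case (Node a ts)
  show ?case
  proof (cases a)
    case (Inl \<sigma>)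
    have wf: "wf_trunc Sig rkS (Node (Inl \<sigma>) ts)"
      using Node.prems Inl by simp
    let ?r = "R_tree q \<sigma> (map (run Node) ts)"
    have "Mhat rkQ R h (map_rtree (map_sum id lookahead) (Node a ts)) q
        = inst ?r (\<lambda>q' i. (map (Mhat rkQ R h) (map (map_rtree (map_sum id lookahead)) ts) ! i) q')"
      using Inl by (simp add: Mhat_Inl R_tree_def run_map_lookahead o_def)
    also have "\<dots> = inst ?r (\<lambda>q' i. map_rtree (relabel lookahead) ((map Mtree ts ! i) q'))"
      by (rule inst_cong[OF wf_rhs_R_tree[OF Node.prems(2) wf]])
        (use Node.IH wf in \<open>auto simp: wf_trunc_Inl id_def\<close>)
    finally show ?thesis
      using Inl by (simp add: Mhat_Inl relabel_inst id_def)
  qed (simp add: Mhat_Inr params_def)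
qed

lemma map_lookahead_in_TSigP:
  "wf_trunc Sig rkS t \<Longrightarrow> map_rtree (map_sum id lookahead) t \<in> TSigP Sig rkS P"
proof (induction t)
  case (Node a ts)
  then show ?case
    by (cases a) (auto simp: wf_trunc_Inl wf_trunc_Inr TSigP_def lookahead_in_P)
qed

lemma plain_depth_Mtree_truncate_one:
  assumes "Node \<sigma> cs \<in> TSig Sig rkS" and "q \<in> Q"
  shows "plain_depth (Mtree (truncate 1 (Node \<sigma> cs)) q) \<le> height (R_tree q \<sigma> cs)"
proof -
  let ?ts = "map (\<lambda>c. Node (Inr c) []) cs"
  have wf: "wf_trunc Sig rkS (Node (Inl \<sigma>) ?ts)"
    using wf_trunc_truncate[OF assms(1), of 1] unfolding truncate_one .
  have wf_r: "wf_rhs Q rkQ D rkD (length ?ts) (rkQ q) (R_tree q \<sigma> cs)"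
    using wf_rhs_R_tree[OF assms(2) wf] by (simp add: o_def)
  have "plain_depth (inst (R_tree q \<sigma> cs) (\<lambda>q' i. (map Mtree ?ts ! i) q')) \<le> height (R_tree q \<sigma> cs)"
  proof (rule plain_depth_inst[OF wf_r])
    fix q' i assume "q' \<in> Q" "i < length ?ts"
    moreover have "max_list (map plain_depth (params m)) \<le> 1" for m :: nat
      by (rule max_list_le) (auto simp: params_def is_OS_def)
    ultimately show "plain_depth ((map Mtree ?ts ! i) q') \<le> 1"
      by (simp add: Mhat_Inr is_OS_def)
  qed
  then show ?thesis
    by (simp add: truncate_one Mhat_Inl o_def)
qed

lemma rhs_height_bound: "\<exists>c. \<forall>q\<in>Q. \<forall>s\<in>TSig Sig rkS. plain_depth (Mtree (truncate 1 s) q) \<le> c"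
proof -
  define rules where "rules = {(q, \<sigma>, ps). q \<in> Q \<and> \<sigma> \<in> Sig \<and> set ps \<subseteq> P \<and> length ps = rkS \<sigma>}"
  have "rules \<subseteq> Q \<times> Sig \<times> (\<Union>\<sigma>\<in>Sig. {ps. set ps \<subseteq> P \<and> length ps = rkS \<sigma>})"
    by (auto simp: rules_def)
  moreover have "finite (Q \<times> Sig \<times> (\<Union>\<sigma>\<in>Sig. {ps. set ps \<subseteq> P \<and> length ps = rkS \<sigma>}))"
    using is_mttr by (auto simp: is_mttr_def intro!: finite_lists_length_eq)
  ultimately have "finite ((\<lambda>(q, \<sigma>, ps). height (R q \<sigma> ps)) ` rules)"
    by (blast intro: finite_subset)
  then obtain c where c: "\<forall>(q, \<sigma>, ps)\<in>rules. height (R q \<sigma> ps) \<le> c"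
    unfolding finite_nat_set_iff_bounded_le by fastforce
  have "plain_depth (Mtree (truncate 1 s) q) \<le> c" if q: "q \<in> Q" and s: "s \<in> TSig Sig rkS" for q s
  proof -
    obtain \<sigma> cs where s_eq: "s = Node \<sigma> cs"
      by (cases s)
    have "(q, \<sigma>, map lookahead cs) \<in> rules"
      using q s s_eq lookahead_in_P by (auto simp: rules_def TSig_def)
    then show ?thesis
      using c plain_depth_Mtree_truncate_one[OF s[unfolded s_eq] q] s_eq
      by (fastforce simp: R_tree_def)
  qed
  then show ?thesis
    by blast
qed

lemma Mq_eq_relabel_Mtree_truncate:
  assumes "t \<in> TSig Sig rkS"
  shows "Mq rkQ R h q0 t = map_rtree (relabel lookahead) (Mtree (truncate (height t) t) q0)"
proof -
  have "Mq rkQ R h q0 t = Mhat rkQ R h (map_rtree (map_sum id lookahead) (truncate (height t) t)) q0"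
    by (simp add: Mq_def truncate_height rtree.map_comp o_def)
  also have "\<dots> = map_rtree (relabel lookahead) (Mtree (truncate (height t) t) q0)"
    by (rule Mhat_map_lookahead[OF wf_trunc_truncate[OF assms] q0_in_Q])
  finally show ?thesis .
qed

lemma state_nesting_Mtree_truncate_le:
  assumes "\<forall>u\<in>TSigP Sig rkS P. \<forall>\<pi>\<in>paths (Mhat rkQ R h u q0). length (filter is_OS \<pi>) \<le> b"
    and "t \<in> TSig Sig rkS"
  shows "state_nesting (Mtree (truncate d t) q0) \<le> b"
proof -
  have wf: "wf_trunc Sig rkS (truncate d t)"
    by (rule wf_trunc_truncate[OF assms(2)])
  have "state_nesting (Mtree (truncate d t) q0)
      = state_nesting (Mhat rkQ R h (map_rtree (map_sum id lookahead) (truncate d t)) q0)"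
    by (simp add: Mhat_map_lookahead[OF wf q0_in_Q] state_nesting_relabel)
  also have "\<dots> \<le> b"
    using assms(1) map_lookahead_in_TSigP[OF wf] by (blast intro: state_nesting_le_if_paths)
  finally show ?thesis .
qed

lemma plain_depth_Mtree_truncate_le:
  assumes c: "\<forall>q\<in>Q. \<forall>s\<in>TSig Sig rkS. plain_depth (Mtree (truncate 1 s) q) \<le> c"
    and b: "\<And>d. state_nesting (Mtree (truncate d t) q0) \<le> b"
    and t: "t \<in> TSig Sig rkS"
  shows "plain_depth (Mtree (truncate d t) q0) \<le> d * (c * b)"
proof (induction d)
  case 0
  then show ?case
    by (simp add: Mhat_Inr rank_q0 params_def is_OS_def)
next
  case (Suc d)
  let ?u = "Mtree (truncate d t) q0"
  have wf: "wf_trunc Sig rkS (truncate d t)"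
    by (rule wf_trunc_truncate[OF t])
  have "Mtree (truncate (Suc d) t) q0 = subst_states (\<lambda>q s. Mtree (truncate 1 s) q) ?u"
    unfolding expand_leaves_truncate [symmetric] by (rule Mtree_expand_leaves[OF wf q0_in_Q])
  then have "plain_depth (Mtree (truncate (Suc d) t) q0) \<le> weighted_depth c ?u"
    using plain_depth_subst_states[OF wf_out_Mtree[OF wf q0_in_Q] c] by simp
  also have "\<dots> \<le> plain_depth ?u + c * state_nesting ?u"
    by (rule weighted_depth_le)
  also have "\<dots> \<le> d * (c * b) + c * b"
    using Suc.IH b[of d] by (intro add_mono mult_le_mono2) auto
  finally show ?case
    by simp
qed

lemma height_Mq_le:
  assumes c: "\<forall>q\<in>Q. \<forall>s\<in>TSig Sig rkS. plain_depth (Mtree (truncate 1 s) q) \<le> c"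
    and b: "\<forall>u\<in>TSigP Sig rkS P. \<forall>\<pi>\<in>paths (Mhat rkQ R h u q0). length (filter is_OS \<pi>) \<le> b"
    and t: "t \<in> TSig Sig rkS"
  shows "height (Mq rkQ R h q0 t) \<le> (c * b + b) * height t"
proof -
  let ?n = "height t"
  let ?u = "Mtree (truncate ?n t) q0"
  have nesting: "state_nesting (Mtree (truncate d t) q0) \<le> b" for d
    by (rule state_nesting_Mtree_truncate_le[OF b t])
  have "height (Mq rkQ R h q0 t) = height ?u"
    by (simp add: Mq_eq_relabel_Mtree_truncate[OF t] height_map_rtree)
  also have "\<dots> \<le> plain_depth ?u + state_nesting ?u"
    by (rule height_le_plain_depth_add_state_nesting)
  also have "\<dots> \<le> ?n * (c * b) + b"
    using plain_depth_Mtree_truncate_le[OF c nesting t] nesting by (intro add_mono)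
  also have "\<dots> \<le> (c * b + b) * ?n"
  proof -
    have "1 \<le> ?n"
      by (cases t) (simp add: height_Node)
    then show ?thesis
      by (simp add: algebra_simps)
  qed
  finally show ?thesis .
qed

end

theorem mainTheorem10:
  fixes Q :: "'q set" and rkQ :: "'q \<Rightarrow> nat" and P :: "'p set"
    and Sig :: "'s set" and rkS :: "'s \<Rightarrow> nat" and D :: "'d set" and rkD :: "'d \<Rightarrow> nat"
    and q0 :: 'q and R :: "'q \<Rightarrow> 's \<Rightarrow> 'p list \<Rightarrow> ('d,'q) rlab rtree"
    and h :: "'s \<Rightarrow> 'p list \<Rightarrow> 'p"
  assumes "is_mttr Q rkQ P Sig rkS D rkD q0 R h"
    and "depth_proper Q rkQ P Sig rkS q0 R h"
    and "finite_ML_nesting rkQ P Sig rkS q0 R h"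
  shows "LHI rkQ Sig rkS q0 R h"
proof -
  interpret mttr Q rkQ P Sig rkS D rkD q0 R h
    by (rule mttr.intro) (fact assms(1))
  obtain b where b: "\<forall>u\<in>TSigP Sig rkS P. \<forall>\<pi>\<in>paths (Mhat rkQ R h u q0). length (filter is_OS \<pi>) \<le> b"
    using assms(3) unfolding finite_ML_nesting_def by blast
  obtain c where c: "\<forall>q\<in>Q. \<forall>s\<in>TSig Sig rkS. plain_depth (Mtree (truncate 1 s) q) \<le> c"
    using rhs_height_bound by blast
  show ?thesis
    unfolding LHI_def using height_Mq_le[OF c b] by blast
qed

end
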